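(* Let $\mathcal{A}$ be a finite-state invertible synchronous automaton over $\Sigma$ such that the semigroup $S(\mathcal{A})$ contains the identity map of $\Sigma^*$. Then the group of units of $S(\mathcal{A})$ is isomorphic to a self-similar group.
   Context: A synchronous automaton is $(Q,\Sigma,t,o)$ with $Q$ a set of states, $\Sigma$ a finite alphabet, $t:Q\times\Sigma\to Q$ and $o:Q\times\Sigma\to\Sigma$; it is invertible if for each $q$ the map $\sigma\mapsto o(q,\sigma)$ is a permutation of $\Sigma$. Each state $q$ induces $q:\Sigma^*\to\Sigma^*$ by $q(\emptyset)=\emptyset$, $q(\sigma w)=o(q,\sigma)\,q'(w)$ with $q'=t(q,\sigma)$. $S(\mathcal{A})$ is the semigroup generated by the states under composition. A self-similar group is the group generated by the states of an invertible synchronous automaton with possibly infinitely many states. *)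

theory Defs
  imports "HOL-Algebra.Algebra"
begin

fun act :: "('q \<Rightarrow> 'a \<Rightarrow> 'q) \<Rightarrow> ('q \<Rightarrow> 'a \<Rightarrow> 'a) \<Rightarrow> 'q \<Rightarrow> 'a list \<Rightarrow> 'a list" where
  "act t out q [] = []"
| "act t out q (s # w) = out q s # act t out (t q s) w"

text \<open>S(A): the semigroup generated by the state maps under composition
  (all states of the state type are states of the automaton).\<close>
inductive_set aut_semigroup :: "('q \<Rightarrow> 'a \<Rightarrow> 'q) \<Rightarrow> ('q \<Rightarrow> 'a \<Rightarrow> 'a) \<Rightarrow> ('a list \<Rightarrow> 'a list) set"
  for t out where
  gen: "act t out q \<in> aut_semigroup t out"
| comp: "f \<in> aut_semigroup t out \<Longrightarrow> g \<in> aut_semigroup t out \<Longrightarrow> f \<circ> g \<in> aut_semigroup t out"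

text \<open>S(A) viewed as a monoid (meaningful when id belongs to S(A)).\<close>
definition aut_monoid :: "('q \<Rightarrow> 'a \<Rightarrow> 'q) \<Rightarrow> ('q \<Rightarrow> 'a \<Rightarrow> 'a) \<Rightarrow> ('a list \<Rightarrow> 'a list) monoid" where
  "aut_monoid t out = \<lparr>carrier = aut_semigroup t out, monoid.mult = (\<lambda>f g. f \<circ> g), one = id\<rparr>"

text \<open>An invertible synchronous automaton with (possibly infinite) state set Q
  over a finite nonempty alphabet Sig; states and letters are coded as naturals.\<close>
definition invertible_aut :: "nat set \<Rightarrow> nat set \<Rightarrow> (nat \<Rightarrow> nat \<Rightarrow> nat) \<Rightarrow> (nat \<Rightarrow> nat \<Rightarrow> nat) \<Rightarrow> bool" where
  "invertible_aut Sig Q t out \<longleftrightarrow> finite Sig \<and> Sig \<noteq> {} \<and>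
     (\<forall>q\<in>Q. \<forall>s\<in>Sig. t q s \<in> Q) \<and> (\<forall>q\<in>Q. bij_betw (out q) Sig Sig)"

definition ssg_group :: "nat set \<Rightarrow> nat set \<Rightarrow> (nat \<Rightarrow> nat \<Rightarrow> nat) \<Rightarrow> (nat \<Rightarrow> nat \<Rightarrow> nat) \<Rightarrow> (nat list \<Rightarrow> nat list) monoid" where
  "ssg_group Sig Q t out =
     (BijGroup (lists Sig))\<lparr>carrier := generate (BijGroup (lists Sig))
        ((\<lambda>q. restrict (act t out q) (lists Sig)) ` Q)\<rparr>"

end

theory Submission
  imports Defs "HOL-Library.Countable"
begin

(* Every element of S(A) is the map of a word q1...qn of states,
   and the composite q1 o ... o qn is itself computed by the "product automaton" whose
   states are the words over Q; its output and transition at a letter are obtained by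
   feeding the letter through the word from right to left.  Since id is in S(A), the
   maps of all words (including the empty one) lie in S(A).  If the map of a word is a
   unit of S(A), then so is the map of each of its sections (the inverse of a section is
   a section of the inverse).  Hence the product automaton restricted to the words whose
   map is a unit is an invertible automaton (with infinitely many states) whose state maps
   are exactly the units of S(A).  Coding letters and state words as natural numbers, the
   units embed as a subgroup of the bijections of the coded words, and this subgroup,
   being a group, coincides with the group generated by the state maps.  So the group of
   units is isomorphic to the self-similar group generated by the coded automaton. *)

section \<open>The product automaton on words of states\<close>

fun word_map :: "('q \<Rightarrow> 'a \<Rightarrow> 'q) \<Rightarrow> ('q \<Rightarrow> 'a \<Rightarrow> 'a) \<Rightarrow> 'q list \<Rightarrow> 'a list \<Rightarrow> 'a list" where
  "word_map t out [] = id"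
| "word_map t out (q # qs) = act t out q \<circ> word_map t out qs"

fun word_out :: "('q \<Rightarrow> 'a \<Rightarrow> 'a) \<Rightarrow> 'q list \<Rightarrow> 'a \<Rightarrow> 'a" where
  "word_out out [] s = s"
| "word_out out (q # qs) s = out q (word_out out qs s)"

fun word_trans :: "('q \<Rightarrow> 'a \<Rightarrow> 'q) \<Rightarrow> ('q \<Rightarrow> 'a \<Rightarrow> 'a) \<Rightarrow> 'q list \<Rightarrow> 'a \<Rightarrow> 'q list" where
  "word_trans t out [] s = []"
| "word_trans t out (q # qs) s = t q (word_out out qs s) # word_trans t out qs s"

lemma word_map_Nil: "word_map t out qs [] = []"
  by (induction qs) auto

lemma word_map_Cons:
  "word_map t out qs (s # w) = word_out out qs s # word_map t out (word_trans t out qs s) w"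
  by (induction qs) auto

lemma word_map_append: "word_map t out (xs @ ys) = word_map t out xs \<circ> word_map t out ys"
  by (induction xs) auto

lemma bij_word_out:
  assumes "\<forall>q. bij (out q)"
  shows "bij (word_out out qs)"
proof (induction qs)
  case Nil
  have "word_out out [] = id" by auto
  then show ?case by (metis bij_id)
next
  case (Cons q qs)
  have "word_out out (q # qs) = out q \<circ> word_out out qs" by auto
  then show ?case using Cons assms by (metis bij_comp)
qed

section \<open>The semigroup S(A) and its units\<close>

lemma aut_semigroup_word_map:
  "f \<in> aut_semigroup t out \<Longrightarrow> \<exists>qs. f = word_map t out qs"
proof (induction rule: aut_semigroup.induct)
  case (gen q)
  then show ?case by (intro exI[of _ "[q]"]) auto
next
  case (comp f g)
  then obtain xs ys where "f = word_map t out xs" "g = word_map t out ys" by blast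
  then show ?case by (intro exI[of _ "xs @ ys"]) (simp add: word_map_append)
qed

lemma word_map_aut_semigroup:
  assumes "id \<in> aut_semigroup t out"
  shows "word_map t out qs \<in> aut_semigroup t out"
proof (induction qs)
  case Nil
  then show ?case using assms by (simp only: word_map.simps)
next
  case (Cons q qs)
  then show ?case by (metis word_map.simps(2) aut_semigroup.intros)
qed

lemma monoid_aut_monoid:
  "id \<in> aut_semigroup t out \<Longrightarrow> monoid (aut_monoid t out)"
  by (rule monoidI) (auto simp: aut_monoid_def aut_semigroup.comp)

lemma Units_aut_monoid:
  "u \<in> Units (aut_monoid t out) \<longleftrightarrow>
     u \<in> aut_semigroup t out \<and> (\<exists>v\<in>aut_semigroup t out. v \<circ> u = id \<and> u \<circ> v = id)"
  by (auto simp: Units_def aut_monoid_def)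

lemma word_trans_inverse:
  fixes a :: 'a
  assumes vq: "word_map t out vs \<circ> word_map t out qs = id"
    and qv: "word_map t out qs \<circ> word_map t out vs = id"
  defines "b \<equiv> word_out out qs a"
  shows "word_map t out (word_trans t out vs b) \<circ> word_map t out (word_trans t out qs a) = id"
    and "word_map t out (word_trans t out qs a) \<circ> word_map t out (word_trans t out vs b) = id"
proof -
  have left: "word_out out vs b = a \<and>
      word_map t out (word_trans t out vs b) (word_map t out (word_trans t out qs a) w) = w" for w
  proof -
    have "word_map t out vs (word_map t out qs (a # w)) = a # w"
      using vq by (metis comp_apply id_apply)
    then show ?thesis by (simp add: word_map_Cons b_def)
  qed
  have right: "word_map t out (word_trans t out qs a) (word_map t out (word_trans t out vs b) w) = w" for w
  proof -
    have "word_map t out qs (word_map t out vs (b # w)) = b # w"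
      using qv by (metis comp_apply id_apply)
    then show ?thesis using left by (simp add: word_map_Cons b_def)
  qed
  show "word_map t out (word_trans t out vs b) \<circ> word_map t out (word_trans t out qs a) = id"
    using left by (simp add: fun_eq_iff)
  show "word_map t out (word_trans t out qs a) \<circ> word_map t out (word_trans t out vs b) = id"
    using right by (simp add: fun_eq_iff)
qed

lemma word_trans_Units:
  assumes "id \<in> aut_semigroup t out"
    and "word_map t out qs \<in> Units (aut_monoid t out)"
  shows "word_map t out (word_trans t out qs a) \<in> Units (aut_monoid t out)"
proof -
  obtain v where v: "v \<in> aut_semigroup t out" "v \<circ> word_map t out qs = id" "word_map t out qs \<circ> v = id"
    using assms(2) Units_aut_monoid by blast
  then obtain vs where vs: "v = word_map t out vs" using aut_semigroup_word_map by blast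
  note inverse = word_trans_inverse[of t out vs qs a]
  show ?thesis
    unfolding Units_aut_monoid using inverse v vs word_map_aut_semigroup[OF assms(1)] by blast
qed

section \<open>Coding words over a countable alphabet by lists of naturals\<close>

definition code_map :: "('a::countable list \<Rightarrow> 'a list) \<Rightarrow> nat list \<Rightarrow> nat list" where
  "code_map f = restrict (\<lambda>w. map to_nat (f (map from_nat w))) (lists (range (to_nat::'a \<Rightarrow> nat)))"

abbreviation coded_words :: "'a::countable itself \<Rightarrow> nat list set" where
  "coded_words _ \<equiv> lists (range (to_nat::'a \<Rightarrow> nat))"

lemma from_nat_comp_to_nat [simp]: "from_nat \<circ> (to_nat::'a::countable \<Rightarrow> nat) = id"
  by (simp add: fun_eq_iff)

lemma map_from_nat_to_nat [simp]: "map from_nat (map (to_nat::'a::countable \<Rightarrow> nat) xs) = xs"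
  by simp

lemma map_to_nat_coded [simp]: "map (to_nat::'a::countable \<Rightarrow> nat) xs \<in> coded_words TYPE('a)"
  by auto

lemma code_map_in: "w \<in> coded_words TYPE('a) \<Longrightarrow> code_map (f::'a::countable list \<Rightarrow> 'a list) w \<in> coded_words TYPE('a)"
  by (auto simp: code_map_def)

lemma code_map_comp:
  "w \<in> coded_words TYPE('a) \<Longrightarrow> code_map ((f::'a::countable list \<Rightarrow> 'a list) \<circ> g) w = code_map f (code_map g w)"
  using code_map_in[of w g] by (simp add: code_map_def)

lemma code_map_id: "code_map (id::'a::countable list \<Rightarrow> 'a list) = (\<lambda>w\<in>coded_words TYPE('a). w)"
  by (auto simp: code_map_def fun_eq_iff intro!: map_idI)

lemma code_map_inj: "code_map (f::'a::countable list \<Rightarrow> 'a list) = code_map g \<Longrightarrow> f = g"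
proof (rule ext)
  fix x :: "'a list"
  assume "code_map f = code_map g"
  then have "code_map f (map to_nat x) = code_map g (map to_nat x)" by simp
  then have "map to_nat (f x) = map (to_nat::'a \<Rightarrow> nat) (g x)" by (simp add: code_map_def)
  then show "f x = g x" by (metis list.inj_map_strong to_nat_split)
qed

lemma code_map_Bij:
  assumes "(f::'a::countable list \<Rightarrow> 'a list) \<circ> g = id" "g \<circ> f = id"
  shows "code_map f \<in> Bij (coded_words TYPE('a))"
proof -
  let ?S = "coded_words TYPE('a)"
  have "bij_betw (code_map f) ?S ?S"
  proof (rule bij_betw_byWitness[where f'="code_map g"])
    show "\<forall>w\<in>?S. code_map g (code_map f w) = w"
      using assms(2) code_map_comp[of _ g f] code_map_id by (metis restrict_apply')
    show "\<forall>w\<in>?S. code_map f (code_map g w) = w"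
      using assms(1) code_map_comp[of _ f g] code_map_id by (metis restrict_apply')
  qed (use code_map_in in blast)+
  moreover have "code_map f \<in> extensional ?S" by (simp add: code_map_def)
  ultimately show ?thesis by (simp add: Bij_def)
qed

lemma code_map_mult:
  assumes "code_map f \<in> Bij (coded_words TYPE('a))" "code_map g \<in> Bij (coded_words TYPE('a))"
  shows "code_map ((f::'a::countable list \<Rightarrow> 'a list) \<circ> g)
           = code_map f \<otimes>\<^bsub>BijGroup (coded_words TYPE('a))\<^esub> code_map g"
proof -
  have "code_map (f \<circ> g) w = compose (coded_words TYPE('a)) (code_map f) (code_map g) w" for w
    by (cases "w \<in> coded_words TYPE('a)") (simp_all add: compose_def code_map_comp code_map_def)
  then show ?thesis using assms by (simp add: BijGroup_def fun_eq_iff)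
qed

lemma code_map_hom_units:
  fixes t :: "'q \<Rightarrow> 'a::countable \<Rightarrow> 'q"
  shows "code_map \<in> hom (units_of (aut_monoid t out)) (BijGroup (coded_words TYPE('a)))"
proof -
  have Bij: "code_map u \<in> Bij (coded_words TYPE('a))" if "u \<in> Units (aut_monoid t out)" for u
    using that Units_aut_monoid code_map_Bij by blast
  show ?thesis
    by (rule homI)
       (auto simp: units_of_carrier units_of_mult aut_monoid_def BijGroup_def Bij
             code_map_mult[OF Bij Bij, simplified BijGroup_def])
qed

lemma bij_betw_coded:
  assumes "bij (h::'a::countable \<Rightarrow> 'a)"
  shows "bij_betw (\<lambda>s. to_nat (h (from_nat s))) (range (to_nat::'a \<Rightarrow> nat)) (range (to_nat::'a \<Rightarrow> nat))"
proof (rule bij_betw_byWitness[where f'="\<lambda>s. to_nat (inv_into UNIV h (from_nat s :: 'a))"])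
  show "\<forall>s\<in>range (to_nat::'a \<Rightarrow> nat). to_nat (inv_into UNIV h (from_nat (to_nat (h (from_nat s))))) = s"
    using assms by (auto simp: bij_def)
  show "\<forall>s\<in>range (to_nat::'a \<Rightarrow> nat). to_nat (h (from_nat (to_nat (inv_into UNIV h (from_nat s :: 'a))))) = s"
    using assms by (auto simp: bij_def surj_f_inv_f)
qed auto

section \<open>The coded product automaton\<close>

text \<open>States are codes of words of states, letters are codes of letters.  The state set is
  the set of codes of words whose map is a unit of S(A).\<close>

definition code_trans :: "('q::countable \<Rightarrow> 'a::countable \<Rightarrow> 'q) \<Rightarrow> ('q \<Rightarrow> 'a \<Rightarrow> 'a) \<Rightarrow> nat \<Rightarrow> nat \<Rightarrow> nat" where
  "code_trans t out n s = to_nat (word_trans t out (from_nat n :: 'q list) (from_nat s :: 'a))"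

definition code_out :: "('q::countable \<Rightarrow> 'a::countable \<Rightarrow> 'a) \<Rightarrow> nat \<Rightarrow> nat \<Rightarrow> nat" where
  "code_out out n s = to_nat (word_out out (from_nat n :: 'q list) (from_nat s :: 'a))"

definition unit_states :: "('q::countable \<Rightarrow> 'a \<Rightarrow> 'q) \<Rightarrow> ('q \<Rightarrow> 'a \<Rightarrow> 'a) \<Rightarrow> nat set" where
  "unit_states t out = {n. word_map t out (from_nat n :: 'q list) \<in> Units (aut_monoid t out)}"

lemma act_code:
  fixes t :: "'q::countable \<Rightarrow> 'a::countable \<Rightarrow> 'q"
  shows "restrict (act (code_trans t out) (code_out out) n) (coded_words TYPE('a))
           = code_map (word_map t out (from_nat n))"
proof -
  have "act (code_trans t out) (code_out out) n w = map to_nat (word_map t out (from_nat n) (map from_nat w))"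
    if "w \<in> coded_words TYPE('a)" for w
    using that
  proof (induction w arbitrary: n)
    case Nil
    then show ?case by (simp add: word_map_Nil)
  next
    case (Cons s w)
    then obtain a :: 'a where "s = to_nat a" by auto
    then show ?case using Cons by (simp add: word_map_Cons code_trans_def code_out_def)
  qed
  then show ?thesis by (auto simp: code_map_def fun_eq_iff)
qed

text \<open>The coded automaton is invertible: its states are closed under sections by
  word_trans_Units, and its outputs are permutations by bij_word_out.\<close>

lemma invertible_code_aut:
  fixes t :: "'q::countable \<Rightarrow> 'a::finite \<Rightarrow> 'q"
  assumes "\<forall>q. bij (out q)" and "id \<in> aut_semigroup t out"
  shows "invertible_aut (range (to_nat::'a \<Rightarrow> nat)) (unit_states t out) (code_trans t out) (code_out out)"
  unfolding invertible_aut_def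
proof (intro conjI ballI)
  show "finite (range (to_nat::'a \<Rightarrow> nat))" by simp
  show "range (to_nat::'a \<Rightarrow> nat) \<noteq> {}" by simp
next
  fix n s
  assume "n \<in> unit_states t out"
  then show "code_trans t out n s \<in> unit_states t out"
    using word_trans_Units[OF assms(2)] by (simp add: unit_states_def code_trans_def)
next
  fix n
  show "bij_betw (code_out out n) (range (to_nat::'a \<Rightarrow> nat)) (range (to_nat::'a \<Rightarrow> nat))"
    using bij_betw_coded[OF bij_word_out[OF assms(1)]] by (simp add: code_out_def[abs_def])
qed

lemma code_aut_state_maps:
  fixes t :: "'q::countable \<Rightarrow> 'a::countable \<Rightarrow> 'q"
  shows "(\<lambda>n. restrict (act (code_trans t out) (code_out out) n) (coded_words TYPE('a))) ` unit_states t out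
           = code_map ` Units (aut_monoid t out)"
    (is "?state_map ` _ = _")
proof -
  have "?state_map ` unit_states t out = (\<lambda>n. code_map (word_map t out (from_nat n))) ` unit_states t out"
    by (simp add: act_code)
  also have "\<dots> = code_map ` (\<lambda>n. word_map t out (from_nat n)) ` unit_states t out"
    by (simp add: image_image)
  also have "(\<lambda>n. word_map t out (from_nat n)) ` unit_states t out = Units (aut_monoid t out)"
  proof
    show "(\<lambda>n. word_map t out (from_nat n)) ` unit_states t out \<subseteq> Units (aut_monoid t out)"
      by (auto simp: unit_states_def)
    show "Units (aut_monoid t out) \<subseteq> (\<lambda>n. word_map t out (from_nat n)) ` unit_states t out"
    proof
      fix u assume u: "u \<in> Units (aut_monoid t out)"
      then obtain qs where qs: "u = word_map t out qs"
        using Units_aut_monoid aut_semigroup_word_map by blast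
      with u have "to_nat qs \<in> unit_states t out" by (simp add: unit_states_def)
      with qs show "u \<in> (\<lambda>n. word_map t out (from_nat n)) ` unit_states t out"
        by (intro image_eqI[where x="to_nat qs"]) simp_all
    qed
  qed
  finally show ?thesis .
qed

lemma (in group) generate_subgroup_eq:
  assumes "subgroup H G"
  shows "generate G H = H"
proof
  show "generate G H \<subseteq> H" using generate_subgroup_incl[OF subset_refl assms] .
  show "H \<subseteq> generate G H" using generate.incl[of _ H G] by blast
qed

theorem mainTheorem13:
  fixes t :: "'q::finite \<Rightarrow> 'a::finite \<Rightarrow> 'q" and out :: "'q \<Rightarrow> 'a \<Rightarrow> 'a"
  assumes "\<forall>q. bij (out q)"
    and "id \<in> aut_semigroup t out"
  shows "\<exists>Sig Q t' out'. invertible_aut Sig Q t' out' \<and>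
           units_of (aut_monoid t out) \<cong> ssg_group Sig Q t' out'"
proof -
  let ?U = "units_of (aut_monoid t out)"
  let ?Bij = "BijGroup (coded_words TYPE('a))"
  let ?G = "ssg_group (range (to_nat::'a \<Rightarrow> nat)) (unit_states t out) (code_trans t out) (code_out out)"
  have "group_hom ?U ?Bij code_map"
    by (intro group_hom.intro group_hom_axioms.intro monoid.units_group monoid_aut_monoid
        assms(2) group_BijGroup code_map_hom_units)
  then have subgroup_image: "subgroup (code_map ` Units (aut_monoid t out)) ?Bij"
    using group_hom.img_is_subgroup by (fastforce simp: units_of_carrier)
  have "carrier ?G = generate ?Bij (code_map ` Units (aut_monoid t out))"
    using code_aut_state_maps[of t out] by (simp add: ssg_group_def)
  also have "\<dots> = code_map ` Units (aut_monoid t out)"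
    using group.generate_subgroup_eq[OF group_BijGroup subgroup_image] .
  finally have carrier_G: "carrier ?G = code_map ` Units (aut_monoid t out)" .
  have "code_map \<in> iso ?U ?G"
    unfolding iso_def
  proof (intro CollectI conjI)
    show "code_map \<in> hom ?U ?G"
      using code_map_hom_units[of t out] carrier_G by (auto simp: hom_def ssg_group_def units_of_carrier)
    show "bij_betw code_map (carrier ?U) (carrier ?G)"
      using carrier_G code_map_inj by (auto simp: units_of_carrier bij_betw_def inj_on_def)
  qed
  then show ?thesis using invertible_code_aut[OF assms] is_isoI by blast
qed

end
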